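(* Let $k$ be an infinite Brauer field of characteristic $0$, let $d\ge 1$, and assume that $\Sigma^*((d))$ holds. There is a constant $C(d)$ such that for every finite-dimensional $k$-vector space $V$ and every homogeneous polynomial $f$ of degree $d$ on $V$ that is diagonal of rank $>C(d)$, there is a three-dimensional subspace $E$ of $V$ such that $f|_E$ is good.
   Context: A field $k$ is a Brauer field if for every $d\ge 1$ there is $N_k(d)$ such that every equation $a_1x_1^d+\cdots+a_nx_n^d=0$ with $n>N_k(d)$, $a_i\in k$, has a non-trivial solution in $k^n$. A homogeneous polynomial $f$ of degree $d$ on $V$ is diagonal of rank $r$ if there are linear coordinates $x_1,\ldots,x_n$ on $V$ with $f=a_1x_1^d+\cdots+a_rx_r^d$ and $a_1,\ldots,a_r\in k$ all nonzero. A homogeneous polynomial $h$ of degree $d$ on a $3$-dimensional space is good if $h=xy^{d-1}+ay^d+bz^d$ for some coordinates $x,y,z$, some $a\in k$, $b\in k^{\times}$. Multi-degrees are tuples $(e_1\ge\cdots\ge e_s\ge 1)$ compared lexicographically (a proper initial segment being smaller). Strength: for a homogeneous $f$ of degree $d>0$, $\operatorname{str}(f)$ is the minimal $s$ with $f=\sum_{t=1}^s g_th_t$, $g_t,h_t$ homogeneous over $k$ of degrees $<d$; the strength of a tuple is the minimal strength of a nontrivial $k$-linear combination of its members of equal degree. $\Sigma(\underline{e})$ is the statement: there is a constant $C$ such that for every finite-dimensional $k$-vector space $U$ and every tuple $\underline{g}$ of homogeneous polynomials on $U$ of multi-degree $\underline{e}$ with $\operatorname{str}(\underline{g})>C$,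 the $k$-points of the common zero locus $Z(\underline{g})$ are Zariski dense in $Z(\underline{g})$. $\Sigma^*((d))$ is the statement that $\Sigma(\underline{e})$ holds for every multi-degree $\underline{e}<(d)$, i.e. every multi-degree with first entry $<d$. *)

theory Defs
  imports "HOL-Library.Poly_Mapping" "HOL-Algebra.Algebraic_Closure_Type"
begin

text \<open>A polynomial "on an n-dimensional space" is one whose variables are among 0..n-1.\<close>

type_synonym 'a mpoly = "(nat \<Rightarrow>\<^sub>0 nat) \<Rightarrow>\<^sub>0 'a"

definition mdeg :: "(nat \<Rightarrow>\<^sub>0 nat) \<Rightarrow> nat" where
  "mdeg m = (\<Sum>i\<in>Poly_Mapping.keys m. Poly_Mapping.lookup m i)"

definition homogeneous :: "nat \<Rightarrow> 'a::zero mpoly \<Rightarrow> bool" where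
  "homogeneous e p \<longleftrightarrow> (\<forall>m\<in>Poly_Mapping.keys p. mdeg m = e)"

definition in_vars :: "nat \<Rightarrow> 'a::zero mpoly \<Rightarrow> bool" where
  "in_vars n p \<longleftrightarrow> (\<forall>m\<in>Poly_Mapping.keys p. Poly_Mapping.keys m \<subseteq> {..<n})"

definition Var :: "nat \<Rightarrow> 'a::{zero,one} mpoly" where
  "Var i = Poly_Mapping.single (Poly_Mapping.single i 1) 1"

definition Const :: "'a::zero \<Rightarrow> 'a mpoly" where
  "Const c = Poly_Mapping.single 0 c"

text \<open>Evaluation of a polynomial after applying a coefficient map phi; with phi = Const
  and x = linear forms this is substitution (composition with a linear map).\<close>
definition eval_hom :: "('a::zero \<Rightarrow> 'b::comm_semiring_1) \<Rightarrow> (nat \<Rightarrow> 'b) \<Rightarrow> 'a mpoly \<Rightarrow> 'b" where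
  "eval_hom phi x p = (\<Sum>m\<in>Poly_Mapping.keys p. phi (Poly_Mapping.lookup p m) * (\<Prod>i\<in>Poly_Mapping.keys m. x i ^ Poly_Mapping.lookup m i))"

definition brauer_field :: "'k::field itself \<Rightarrow> bool" where
  "brauer_field _ \<longleftrightarrow> (\<forall>d::nat\<ge>1. \<exists>N::nat. \<forall>n>N. \<forall>a::nat \<Rightarrow> 'k.
      \<exists>x::nat \<Rightarrow> 'k. (\<exists>i<n. x i \<noteq> 0) \<and> (\<Sum>i<n. a i * x i ^ d) = 0)"

definition str_le :: "nat \<Rightarrow> nat \<Rightarrow> 'k::comm_ring_1 mpoly \<Rightarrow> nat \<Rightarrow> bool" where
  "str_le n d f s \<longleftrightarrow> (\<exists>(g::nat \<Rightarrow> 'k mpoly) (h::nat \<Rightarrow> 'k mpoly) (a::nat \<Rightarrow> nat) (b::nat \<Rightarrow> nat).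
      f = (\<Sum>t<s. g t * h t) \<and>
      (\<forall>t<s. homogeneous (a t) (g t) \<and> homogeneous (b t) (h t) \<and> a t < d \<and> b t < d
             \<and> in_vars n (g t) \<and> in_vars n (h t)))"

definition strength :: "nat \<Rightarrow> nat \<Rightarrow> 'k::comm_ring_1 mpoly \<Rightarrow> nat" where
  "strength n d f = (LEAST s. str_le n d f s)"

definition tuple_str_gt :: "nat \<Rightarrow> nat list \<Rightarrow> (nat \<Rightarrow> 'k::field mpoly) \<Rightarrow> nat \<Rightarrow> bool" where
  "tuple_str_gt n e g C \<longleftrightarrow> (\<forall>(c::nat \<Rightarrow> 'k) (\<delta>::nat).
      (\<exists>i<length e. e ! i = \<delta> \<and> c i \<noteq> 0) \<longrightarrow>
      strength n \<delta> (\<Sum>i\<in>{i. i < length e \<and> e ! i = \<delta>}. Const (c i) * g i) > C)"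

text \<open>The k-points of Z(g) are Zariski dense in Z(g) (a subset of kbar^n):
  every polynomial over kbar vanishing on the k-points of Z(g) vanishes on Z(g).\<close>
definition kpoints_dense :: "nat \<Rightarrow> nat \<Rightarrow> (nat \<Rightarrow> 'k::field mpoly) \<Rightarrow> bool" where
  "kpoints_dense n s g \<longleftrightarrow> (\<forall>h :: 'k alg_closure mpoly. in_vars n h \<longrightarrow>
      (\<forall>x::nat \<Rightarrow> 'k. (\<forall>i<s. eval_hom id x (g i) = 0) \<longrightarrow> eval_hom id (to_ac \<circ> x) h = 0) \<longrightarrow>
      (\<forall>y::nat \<Rightarrow> 'k alg_closure. (\<forall>i<s. eval_hom to_ac y (g i) = 0) \<longrightarrow> eval_hom id y h = 0))"

definition multidegree :: "nat list \<Rightarrow> bool" where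
  "multidegree e \<longleftrightarrow> e \<noteq> [] \<and> sorted_wrt (\<ge>) e \<and> (\<forall>x\<in>set e. x \<ge> 1)"

definition Sigma :: "'k::field itself \<Rightarrow> nat list \<Rightarrow> bool" where
  "Sigma _ e \<longleftrightarrow> (\<exists>C::nat. \<forall>(n::nat) (g::nat \<Rightarrow> 'k mpoly).
      (\<forall>i<length e. homogeneous (e ! i) (g i) \<and> in_vars n (g i)) \<and> tuple_str_gt n e g C
      \<longrightarrow> kpoints_dense n (length e) g)"

definition Sigma_star :: "'k::field itself \<Rightarrow> nat \<Rightarrow> bool" where
  "Sigma_star K d \<longleftrightarrow> (\<forall>e. multidegree e \<and> hd e < d \<longrightarrow> Sigma K e)"

text \<open>Linear coordinates: the linear forms l_i = sum_j M i j X_j (i<n) are linearly independent.\<close>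
definition lin_indep_rows :: "nat \<Rightarrow> nat \<Rightarrow> (nat \<Rightarrow> nat \<Rightarrow> 'k::field) \<Rightarrow> bool" where
  "lin_indep_rows r n M \<longleftrightarrow> (\<forall>c::nat \<Rightarrow> 'k. (\<forall>j<n. (\<Sum>i<r. c i * M i j) = 0) \<longrightarrow> (\<forall>i<r. c i = 0))"

definition lin_form :: "nat \<Rightarrow> (nat \<Rightarrow> 'k::field) \<Rightarrow> 'k mpoly" where
  "lin_form n v = (\<Sum>j<n. Const (v j) * Var j)"

definition diagonal_rank :: "nat \<Rightarrow> nat \<Rightarrow> 'k::field mpoly \<Rightarrow> nat \<Rightarrow> bool" where
  "diagonal_rank n d f r \<longleftrightarrow> (\<exists>(M::nat \<Rightarrow> nat \<Rightarrow> 'k) (a::nat \<Rightarrow> 'k).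
      r \<le> n \<and> lin_indep_rows n n M \<and> (\<forall>i<r. a i \<noteq> 0) \<and>
      f = (\<Sum>i<r. Const (a i) * lin_form n (M i) ^ d))"

definition good :: "nat \<Rightarrow> 'k::field mpoly \<Rightarrow> bool" where
  "good d h \<longleftrightarrow> (\<exists>(N::nat \<Rightarrow> nat \<Rightarrow> 'k) (a::'k) (b::'k). lin_indep_rows 3 3 N \<and> b \<noteq> 0 \<and>
      h = lin_form 3 (N 0) * lin_form 3 (N 1) ^ (d - 1) + Const a * lin_form 3 (N 1) ^ d
          + Const b * lin_form 3 (N 2) ^ d)"

text \<open>Restriction of f (on k^n) to the span E of v 0, v 1, v 2, written in the coordinates
  given by this basis of E.\<close>
definition restrict3 :: "nat \<Rightarrow> (nat \<Rightarrow> nat \<Rightarrow> 'k::field) \<Rightarrow> 'k mpoly \<Rightarrow> 'k mpoly" where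
  "restrict3 n v f = eval_hom Const (\<lambda>j. \<Sum>t<3. Const (v t j) * Var t) f"

end

theory Submission
  imports Defs "Jordan_Normal_Form.Determinant"
begin

(* Write f = a_0 l_0^d + ... + a_(r-1) l_(r-1)^d with independent linear forms l_i.  The values
  y_t i = l_i(v_t), t < 3, can be prescribed arbitrarily, so it suffices to find a 3 x r matrix y
  of rank 3 for which sum_i a_i (y_0i X + y_1i Y + y_2i Z)^d is good.  Take y_2 = e_p,
  y_1 = c u + e_q and y_0 = u with u supported on G = K^(d-1) indices other than p and q; the form
  becomes a_p Z^d + a_q Y^d + sum_j (d choose j) m_j Y^j X^(d-j) with the moments
  m_j = sum_i a_i u_i^d c_i^j.

  Let K be such that every diagonal form of degree d in K variables has a nontrivial zero.  By
  induction on l there are u, c on K^l indices whose moments m_0, ..., m_(l-1) vanish while m_l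
  does not: split the indices into K blocks of K^(l-1) indices, scale the solution on block k by
  mu_k, where mu is a nontrivial zero of sum_k m_(l-1)(block k) mu_k^d, so that m_(l-1) cancels
  as well, and shift c by a constant on one block, which changes m_l by a nonzero multiple of
  that constant.  For l = d - 1 the form is d m_(d-1) X Y^(d-1) + (m_d + a_q) Y^d + a_p Z^d,
  which is good. *)

interpretation Const: comm_ring_hom "Const :: 'a::comm_ring_1 \<Rightarrow> 'a mpoly"
  by unfold_locales (simp_all add: Const_def single_add mult_single flip: single_one)

definition monomial_value :: "(nat \<Rightarrow> 'b::comm_semiring_1) \<Rightarrow> (nat \<Rightarrow>\<^sub>0 nat) \<Rightarrow> 'b" where
  "monomial_value x m = (\<Prod>i\<in>Poly_Mapping.keys m. x i ^ Poly_Mapping.lookup m i)"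

lemma monomial_value_add: "monomial_value x (m + m') = monomial_value x m * monomial_value x m'"
proof -
  let ?S = "Poly_Mapping.keys m \<union> Poly_Mapping.keys m'"
  have *: "monomial_value x m'' = (\<Prod>i\<in>?S. x i ^ Poly_Mapping.lookup m'' i)"
    if "Poly_Mapping.keys m'' \<subseteq> ?S" for m''
    unfolding monomial_value_def
    by (rule prod.mono_neutral_left) (use that in \<open>auto simp: in_keys_iff\<close>)
  show ?thesis
    using keys_add[of m m'] by (simp add: * lookup_add power_add prod.distrib)
qed

lemma eval_hom_eq_sum_keys:
  "eval_hom phi x p = (\<Sum>m\<in>Poly_Mapping.keys p. phi (Poly_Mapping.lookup p m) * monomial_value x m)"
  by (simp add: eval_hom_def monomial_value_def)

lemma poly_mapping_sum_single_lookup: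
  "p = (\<Sum>m\<in>Poly_Mapping.keys p. Poly_Mapping.single m (Poly_Mapping.lookup p m))"
  by (rule poly_mapping_eqI) (simp add: lookup_sum lookup_single when_def in_keys_iff)

context comm_semiring_hom
begin

lemma eval_hom_single: "eval_hom hom x (Poly_Mapping.single m c) = hom c * monomial_value x m"
  by (cases "c = 0") (simp_all add: eval_hom_eq_sum_keys)

lemma eval_hom_add: "eval_hom hom x (p + q) = eval_hom hom x p + eval_hom hom x q"
  unfolding eval_hom_eq_sum_keys
  by (rule setsum_keys_plus_distrib) (simp_all add: hom_add distrib_right)

lemma eval_hom_zero: "eval_hom hom x 0 = 0"
  by (simp add: eval_hom_def)

lemma eval_hom_sum: "eval_hom hom x (\<Sum>i\<in>A. p i) = (\<Sum>i\<in>A. eval_hom hom x (p i))"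
  by (induction A rule: infinite_finite_induct) (simp_all add: eval_hom_add eval_hom_zero)

lemma eval_hom_mult: "eval_hom hom x (p * q) = eval_hom hom x p * eval_hom hom x q"
proof -
  let ?P = "Poly_Mapping.keys p" and ?Q = "Poly_Mapping.keys q"
  have "p * q = (\<Sum>m\<in>?P. \<Sum>m'\<in>?Q.
      Poly_Mapping.single (m + m') (Poly_Mapping.lookup p m * Poly_Mapping.lookup q m'))"
  proof -
    have "p * q = (\<Sum>m\<in>?P. Poly_Mapping.single m (Poly_Mapping.lookup p m)) *
        (\<Sum>m'\<in>?Q. Poly_Mapping.single m' (Poly_Mapping.lookup q m'))"
      using poly_mapping_sum_single_lookup[of p] poly_mapping_sum_single_lookup[of q] by simp
    then show ?thesis
      by (simp add: sum_product mult_single)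
  qed
  then show ?thesis
    by (simp add: eval_hom_sum eval_hom_single eval_hom_eq_sum_keys[of _ _ p]
        eval_hom_eq_sum_keys[of _ _ q] hom_mult monomial_value_add sum_product mult_ac)
qed

lemma comm_semiring_hom_eval_hom: "comm_semiring_hom (eval_hom hom x)"
proof
  show "eval_hom hom x 1 = 1"
    using eval_hom_single[of x 0 1] by (simp add: monomial_value_def flip: single_one)
qed (simp_all add: eval_hom_zero eval_hom_add eval_hom_mult)

lemma eval_hom_Const [simp]: "eval_hom hom x (Const c) = hom c"
  by (simp add: Const_def eval_hom_single monomial_value_def)

lemma eval_hom_Var [simp]: "eval_hom hom x (Var i) = x i"
  by (simp add: Var_def eval_hom_single monomial_value_def)

end

lemma comm_semiring_hom_restrict3: "comm_semiring_hom (restrict3 n v)"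
  unfolding restrict3_def[abs_def] by (rule Const.comm_semiring_hom_eval_hom)

lemma restrict3_lin_form:
  "restrict3 n v (lin_form n w) = lin_form 3 (\<lambda>t. \<Sum>j<n. w j * v t j)"
proof -
  have "restrict3 n v (lin_form n w) = (\<Sum>j<n. \<Sum>t<3. Const (w j * v t j) * Var t)"
    by (simp add: restrict3_def lin_form_def Const.eval_hom_sum Const.eval_hom_mult
        Const.hom_mult sum_distrib_left mult_ac)
  also have "\<dots> = lin_form 3 (\<lambda>t. \<Sum>j<n. w j * v t j)"
    by (subst sum.swap) (simp add: lin_form_def Const.hom_sum sum_distrib_right)
  finally show ?thesis .
qed

lemma restrict3_diagonal:
  "restrict3 n v (\<Sum>i<r. Const (a i) * lin_form n (M i) ^ d)
     = (\<Sum>i<r. Const (a i) * lin_form 3 (\<lambda>t. \<Sum>j<n. M i j * v t j) ^ d)"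
proof -
  interpret restrict: comm_semiring_hom "restrict3 n v"
    by (rule comm_semiring_hom_restrict3)
  show ?thesis
    by (simp add: restrict.hom_sum restrict.hom_mult restrict.hom_power restrict3_lin_form)
      (simp add: restrict3_def)
qed

lemma lin_form_3: "lin_form 3 w = Const (w 0) * Var 0 + Const (w 1) * Var 1 + Const (w 2) * Var 2"
  by (simp add: lin_form_def eval_nat_numeral lessThan_Suc add_ac)

lemma det_ne_0_if_lin_indep_rows:
  assumes "lin_indep_rows n n M"
  shows "det (mat n n (\<lambda>(i, j). M i j)) \<noteq> 0"
proof
  let ?A = "mat n n (\<lambda>(i, j). M i j)"
  assume "det ?A = 0"
  then have "det (transpose_mat ?A) = 0"
    using det_transpose[of ?A n] by simp
  then obtain c where c: "c \<in> carrier_vec n" "c \<noteq> 0\<^sub>v n" "transpose_mat ?A *\<^sub>v c = 0\<^sub>v n"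
    using det_0_iff_vec_prod_zero[of "transpose_mat ?A" n] by auto
  have "\<forall>j<n. (\<Sum>i<n. vec_index c i * M i j) = 0"
  proof (intro allI impI)
    fix j assume "j < n"
    then have "vec_index (transpose_mat ?A *\<^sub>v c) j = 0" using c(3) by simp
    then show "(\<Sum>i<n. vec_index c i * M i j) = 0"
      using \<open>j < n\<close> c(1) by (simp add: scalar_prod_def atLeast0LessThan mult.commute)
  qed
  then have "c = 0\<^sub>v n"
    using assms c(1) unfolding lin_indep_rows_def by (intro eq_vecI) auto
  with c(2) show False by simp
qed

lemma lin_indep_rows_solvable:
  assumes "lin_indep_rows n n M"
  shows "\<exists>w. (\<forall>j\<ge>n. w j = 0) \<and> (\<forall>i<n. (\<Sum>j<n. M i j * w j) = y i)"
proof -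
  let ?A = "mat n n (\<lambda>(i, j). M i j)"
  have "?A \<in> Units (ring_mat TYPE('a) n ())"
    using det_ne_0_if_lin_indep_rows[OF assms] by (intro det_non_zero_imp_unit) auto
  then obtain B where B: "B \<in> carrier_mat n n" "?A * B = 1\<^sub>m n"
    by (auto simp: Units_def ring_mat_def)
  define w where "w j = (if j < n then vec_index (B *\<^sub>v vec n y) j else 0)" for j
  have "?A *\<^sub>v (B *\<^sub>v vec n y) = vec n y"
    using B by (simp flip: assoc_mult_mat_vec[of ?A n n B n])
  then have "vec_index (?A *\<^sub>v (B *\<^sub>v vec n y)) i = y i" if "i < n" for i
    using that by simp
  then have "(\<Sum>j<n. M i j * w j) = y i" if "i < n" for i
    using that B(1) by (simp add: w_def scalar_prod_def atLeast0LessThan)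
  moreover have "\<forall>j\<ge>n. w j = 0"
    by (simp add: w_def)
  ultimately show ?thesis
    by blast
qed

lemma lin_indep_rows_if_image:
  assumes "lin_indep_rows r n y"
    and "\<And>t i. t < r \<Longrightarrow> i < n \<Longrightarrow> (\<Sum>j<m. M i j * v t j) = y t i"
  shows "lin_indep_rows r m v"
  unfolding lin_indep_rows_def
proof (intro allI impI)
  fix c :: "nat \<Rightarrow> 'a" and t
  assume c: "\<forall>j<m. (\<Sum>t<r. c t * v t j) = 0" and "t < r"
  have "(\<Sum>t<r. c t * y t i) = 0" if "i < n" for i
  proof -
    have "(\<Sum>t<r. c t * y t i) = (\<Sum>t<r. \<Sum>j<m. c t * (M i j * v t j))"
      using that by (intro sum.cong) (simp_all add: assms(2)[symmetric] sum_distrib_left)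
    also have "\<dots> = (\<Sum>j<m. M i j * (\<Sum>t<r. c t * v t j))"
      by (subst sum.swap) (simp add: sum_distrib_left mult_ac)
    also have "\<dots> = 0"
      using c by simp
    finally show ?thesis .
  qed
  then show "c t = 0"
    using assms(1) \<open>t < r\<close> unfolding lin_indep_rows_def by blast
qed

definition moment :: "(nat \<Rightarrow> 'k::comm_ring_1) \<Rightarrow> nat \<Rightarrow> (nat \<Rightarrow> 'k) \<Rightarrow> (nat \<Rightarrow> 'k) \<Rightarrow> nat set \<Rightarrow> nat \<Rightarrow> 'k"
  where "moment a d u c S j = (\<Sum>i\<in>S. a i * u i ^ d * c i ^ j)"

lemma moment_shift:
  "moment a d u (\<lambda>i. c i + \<sigma>) S j
     = (\<Sum>m\<le>j. of_nat (j choose m) * \<sigma> ^ (j - m) * moment a d u c S m)"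
proof -
  have "moment a d u (\<lambda>i. c i + \<sigma>) S j
      = (\<Sum>i\<in>S. \<Sum>m\<le>j. of_nat (j choose m) * \<sigma> ^ (j - m) * (a i * u i ^ d * c i ^ m))"
    by (simp add: moment_def binomial_ring sum_distrib_left mult_ac)
  also have "\<dots> = (\<Sum>m\<le>j. of_nat (j choose m) * \<sigma> ^ (j - m) * moment a d u c S m)"
    by (subst sum.swap) (simp add: moment_def sum_distrib_left)
  finally show ?thesis .
qed

lemma moment_shift_if_lower_vanish:
  assumes "\<forall>m<l. moment a d u c S m = 0"
  shows "\<forall>j<l. moment a d u (\<lambda>i. c i + \<sigma>) S j = 0"
    and "moment a d u (\<lambda>i. c i + \<sigma>) S l = moment a d u c S l"
    and "moment a d u (\<lambda>i. c i + \<sigma>) S (Suc l)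
           = moment a d u c S (Suc l) + of_nat (Suc l) * \<sigma> * moment a d u c S l"
  using assms by (simp_all add: moment_shift atMost_Suc lessThan_Suc_atMost[symmetric] sum.neutral)

lemma moment_group:
  fixes K :: nat
  assumes "finite S" "b ` S \<subseteq> {..<K}"
  shows "moment a d u c S j = (\<Sum>k<K. moment a d u c {i\<in>S. b i = k} j)"
  unfolding moment_def by (rule sum.group[symmetric]) (use assms in auto)

lemma exists_labelling_with_equal_fibres:
  assumes "finite S" "card S = K * L"
  shows "\<exists>b. b ` S \<subseteq> {..<K} \<and> (\<forall>k<K. card {i\<in>S. b i = k} = L)"
  using assms
proof (induction K arbitrary: S)
  case 0
  then show ?case by simp
next
  case (Suc K)
  obtain A where A: "A \<subseteq> S" "card A = L"
    using obtain_subset_with_card_n[of L S] Suc.prems by auto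
  have "card (S - A) = K * L"
    using Suc.prems A by (simp add: card_Diff_subset finite_subset)
  then obtain b where b: "b ` (S - A) \<subseteq> {..<K}" "\<forall>k<K. card {i\<in>S - A. b i = k} = L"
    using Suc.IH[of "S - A"] Suc.prems by auto
  define b' where "b' i = (if i \<in> A then K else b i)" for i
  have "{i\<in>S. b' i = k} = {i\<in>S - A. b i = k}" if "k < K" for k
    using that by (auto simp: b'_def)
  moreover have "{i\<in>S. b' i = K} = A"
    using A(1) b(1) by (auto simp: b'_def)
  ultimately have "\<forall>k<Suc K. card {i\<in>S. b' i = k} = L"
    using b(2) A(2) by (auto simp: less_Suc_eq)
  moreover have "b' ` S \<subseteq> {..<Suc K}"
    using b(1) by (auto simp: b'_def less_Suc_eq)
  ultimately show ?case
    by blast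
qed

lemma moment_glue:
  fixes K :: nat
  assumes "finite S" "b ` S \<subseteq> {..<K}"
    and "\<forall>i\<in>S. u i = \<mu> (b i) * U (b i) i" "\<forall>i\<in>S. c i = C (b i) i + \<sigma> (b i)"
  shows "moment a d u c S j
       = (\<Sum>k<K. \<mu> k ^ d * moment a d (U k) (\<lambda>i. C k i + \<sigma> k) {i\<in>S. b i = k} j)"
proof -
  have "moment a d u c {i\<in>S. b i = k} j = \<mu> k ^ d * moment a d (U k) (\<lambda>i. C k i + \<sigma> k) {i\<in>S. b i = k} j"
    for k
    unfolding moment_def sum_distrib_left
    by (intro sum.cong) (auto simp: assms(3,4) power_mult_distrib mult_ac)
  then show ?thesis
    unfolding moment_group[OF assms(1,2)] by simp
qed

lemma exists_first_nonzero_moment_step: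
  fixes a :: "nat \<Rightarrow> 'k::field_char_0" and K :: nat
  assumes brauer: "\<And>b::nat \<Rightarrow> 'k. \<exists>\<mu>. (\<exists>k<K. \<mu> k \<noteq> 0) \<and> (\<Sum>k<K. b k * \<mu> k ^ d) = 0"
    and "finite S" "b ` S \<subseteq> {..<K}"
    and blocks: "\<And>k. k < K \<Longrightarrow> \<exists>u c. (\<forall>j<l. moment a d u c {i\<in>S. b i = k} j = 0)
                                     \<and> moment a d u c {i\<in>S. b i = k} l \<noteq> 0"
  shows "\<exists>u c. (\<forall>i. i \<notin> S \<longrightarrow> u i = 0) \<and> (\<forall>j<Suc l. moment a d u c S j = 0)
           \<and> moment a d u c S (Suc l) \<noteq> 0"
proof -
  define B where "B k = {i\<in>S. b i = k}" for k
  have "\<exists>u c. (\<forall>j<l. moment a d u c (B k) j = 0) \<and> moment a d u c (B k) l \<noteq> 0" if "k < K" for k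
    using blocks[OF that] by (simp add: B_def)
  then obtain U C where
    lower: "\<And>k. k < K \<Longrightarrow> \<forall>j<l. moment a d (U k) (C k) (B k) j = 0" and
    top: "\<And>k. k < K \<Longrightarrow> moment a d (U k) (C k) (B k) l \<noteq> 0"
    by metis
  obtain \<mu> k0 where \<mu>: "(\<Sum>k<K. moment a d (U k) (C k) (B k) l * \<mu> k ^ d) = 0" "k0 < K" "\<mu> k0 \<noteq> 0"
    using brauer[of "\<lambda>k. moment a d (U k) (C k) (B k) l"] by blast
  define A where "A = (\<Sum>k<K. \<mu> k ^ d * moment a d (U k) (C k) (B k) (Suc l))"
  define \<beta> where "\<beta> = \<mu> k0 ^ d * moment a d (U k0) (C k0) (B k0) l"
  have "\<beta> \<noteq> 0"
    using top[OF \<mu>(2)] \<mu>(3) by (simp add: \<beta>_def)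
  obtain \<zeta> where \<zeta>: "A + of_nat (Suc l) * \<zeta> * \<beta> \<noteq> 0"
  proof (cases "A = 0")
    case True
    with \<open>\<beta> \<noteq> 0\<close> show ?thesis
      by (intro that[of 1]) (simp del: of_nat_Suc)
  next
    case False
    then show ?thesis
      by (intro that[of 0]) simp
  qed
  define \<sigma> where "\<sigma> k = (if k = k0 then \<zeta> else 0)" for k
  define u where "u i = (if i \<in> S then \<mu> (b i) * U (b i) i else 0)" for i
  define c where "c i = C (b i) i + \<sigma> (b i)" for i
  have shifted: "\<forall>j<l. moment a d (U k) (\<lambda>i. C k i + \<sigma> k) (B k) j = 0"
    "moment a d (U k) (\<lambda>i. C k i + \<sigma> k) (B k) l = moment a d (U k) (C k) (B k) l"
    "moment a d (U k) (\<lambda>i. C k i + \<sigma> k) (B k) (Suc l)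
       = moment a d (U k) (C k) (B k) (Suc l) + of_nat (Suc l) * \<sigma> k * moment a d (U k) (C k) (B k) l"
    if "k < K" for k
    using moment_shift_if_lower_vanish[OF lower[OF that]] by simp_all
  have glue: "moment a d u c S j = (\<Sum>k<K. \<mu> k ^ d * moment a d (U k) (\<lambda>i. C k i + \<sigma> k) (B k) j)" for j
    unfolding B_def by (rule moment_glue[OF assms(2,3)]) (simp_all add: u_def c_def)
  have "moment a d u c S j = 0" if "j < Suc l" for j
  proof (cases "j < l")
    case True
    then show ?thesis
      by (simp add: glue shifted(1))
  next
    case False
    with that have "j = l"
      by simp
    with \<mu>(1) show ?thesis
      by (simp add: glue shifted(2) mult.commute)
  qed
  moreover have "moment a d u c S (Suc l) = A + of_nat (Suc l) * \<zeta> * \<beta>"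
  proof -
    have "moment a d u c S (Suc l)
        = A + (\<Sum>k<K. of_nat (Suc l) * \<sigma> k * (\<mu> k ^ d * moment a d (U k) (C k) (B k) l))"
      by (simp add: glue shifted(3) A_def distrib_left sum.distrib mult_ac)
    also have "(\<Sum>k<K. of_nat (Suc l) * \<sigma> k * (\<mu> k ^ d * moment a d (U k) (C k) (B k) l))
        = (\<Sum>k<K. if k = k0 then of_nat (Suc l) * \<zeta> * \<beta> else 0)"
      by (rule sum.cong) (simp_all add: \<sigma>_def \<beta>_def)
    also have "\<dots> = of_nat (Suc l) * \<zeta> * \<beta>"
      using \<mu>(2) by simp
    finally show ?thesis .
  qed
  moreover have "\<forall>i. i \<notin> S \<longrightarrow> u i = 0"
    by (simp add: u_def)
  ultimately show ?thesis
    using \<zeta> by (intro exI[of _ u] exI[of _ c]) simp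
qed

lemma exists_first_nonzero_moment:
  fixes a :: "nat \<Rightarrow> 'k::field_char_0" and K :: nat
  assumes brauer: "\<And>b::nat \<Rightarrow> 'k. \<exists>\<mu>. (\<exists>k<K. \<mu> k \<noteq> 0) \<and> (\<Sum>k<K. b k * \<mu> k ^ d) = 0"
    and "finite S" "card S = K ^ l" "\<forall>i\<in>S. a i \<noteq> 0"
  shows "\<exists>u c. (\<forall>i. i \<notin> S \<longrightarrow> u i = 0) \<and> (\<forall>j<l. moment a d u c S j = 0) \<and> moment a d u c S l \<noteq> 0"
  using assms(2-)
proof (induction l arbitrary: S)
  case 0
  then obtain s where "S = {s}"
    by (auto simp: card_1_singleton_iff)
  with 0 show ?case
    by (intro exI[of _ "\<lambda>i. if i = s then 1 else 0"] exI) (simp add: moment_def)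
next
  case (Suc l)
  obtain b where b: "b ` S \<subseteq> {..<K}" "\<forall>k<K. card {i\<in>S. b i = k} = K ^ l"
    using exists_labelling_with_equal_fibres[of S K "K ^ l"] Suc.prems by auto
  show ?case
  proof (rule exists_first_nonzero_moment_step[OF brauer Suc.prems(1) b(1)])
    fix k assume "k < K"
    then show "\<exists>u c. (\<forall>j<l. moment a d u c {i\<in>S. b i = k} j = 0) \<and> moment a d u c {i\<in>S. b i = k} l \<noteq> 0"
      using Suc.IH[of "{i\<in>S. b i = k}"] Suc.prems b(2) by auto
  qed
qed

lemma sum_power_binary_form_moments:
  fixes p q :: "'k::comm_ring_1 mpoly"
  shows "(\<Sum>i\<in>S. Const (a i) * (Const (u i) * p + Const (c i * u i) * q) ^ d)
       = (\<Sum>j\<le>d. of_nat (d choose j) * Const (moment a d u c S j) * q ^ j * p ^ (d - j))"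
proof -
  have "Const (a i) * (Const (u i) * p + Const (c i * u i) * q) ^ d
      = (\<Sum>j\<le>d. of_nat (d choose j) * Const (a i * u i ^ d * c i ^ j) * q ^ j * p ^ (d - j))" for i
  proof -
    have "(Const (u i) * p + Const (c i * u i) * q) ^ d = (Const (c i * u i) * q + Const (u i) * p) ^ d"
      by (simp add: add.commute)
    also have "\<dots> = (\<Sum>j\<le>d. of_nat (d choose j) * (Const (c i * u i) * q) ^ j * (Const (u i) * p) ^ (d - j))"
      by (rule binomial_ring)
    finally have expand: "(Const (u i) * p + Const (c i * u i) * q) ^ d
        = (\<Sum>j\<le>d. of_nat (d choose j) * (Const (c i * u i) * q) ^ j * (Const (u i) * p) ^ (d - j))" .
    show ?thesis
      unfolding expand sum_distrib_left
    proof (intro sum.cong refl)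
      fix j assume "j \<in> {..d}"
      then have "u i ^ d = u i ^ j * u i ^ (d - j)"
        by (simp flip: power_add)
      then show "Const (a i) * (of_nat (d choose j) * (Const (c i * u i) * q) ^ j * (Const (u i) * p) ^ (d - j))
          = of_nat (d choose j) * Const (a i * u i ^ d * c i ^ j) * q ^ j * p ^ (d - j)"
        by (simp add: Const.hom_mult Const.hom_power power_mult_distrib mult_ac)
    qed
  qed
  then have "(\<Sum>i\<in>S. Const (a i) * (Const (u i) * p + Const (c i * u i) * q) ^ d)
      = (\<Sum>j\<le>d. \<Sum>i\<in>S. of_nat (d choose j) * Const (a i * u i ^ d * c i ^ j) * q ^ j * p ^ (d - j))"
    by (simp add: sum.swap[of _ S])
  also have "\<dots> = (\<Sum>j\<le>d. of_nat (d choose j) * Const (moment a d u c S j) * q ^ j * p ^ (d - j))"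
    by (simp add: moment_def Const.hom_sum sum_distrib_left sum_distrib_right)
  finally show ?thesis .
qed

lemma sum_power_binary_form_lower_moments_vanish:
  fixes p q :: "'k::comm_ring_1 mpoly"
  assumes "\<forall>j<e. moment a (Suc e) u c S j = 0"
  shows "(\<Sum>i\<in>S. Const (a i) * (Const (u i) * p + Const (c i * u i) * q) ^ Suc e)
       = Const (of_nat (Suc e) * moment a (Suc e) u c S e) * p * q ^ e
         + Const (moment a (Suc e) u c S (Suc e)) * q ^ Suc e"
proof -
  define t where "t j = of_nat (Suc e choose j) * Const (moment a (Suc e) u c S j) * q ^ j * p ^ (Suc e - j)" for j
  have "(\<Sum>j\<le>Suc e. t j) = (\<Sum>j<e. t j) + t e + t (Suc e)"
    by (simp add: lessThan_Suc_atMost[symmetric])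
  moreover have "(\<Sum>j<e. t j) = 0"
    using assms by (simp add: t_def)
  ultimately show ?thesis
    unfolding sum_power_binary_form_moments t_def[symmetric]
    by (simp add: t_def Const.hom_mult Const.hom_add Const.hom_of_nat mult_ac)
qed

lemma good_normal_form:
  assumes "m \<noteq> 0" "b \<noteq> 0"
  shows "good d (Const m * Var 0 * Var 1 ^ (d - 1) + Const a * Var 1 ^ d + Const b * Var 2 ^ d)"
proof -
  define N :: "nat \<Rightarrow> nat \<Rightarrow> 'a" where "N t j = (if t = j then if t = 0 then m else 1 else 0)" for t j
  have "lin_indep_rows 3 3 N"
    using assms(1) by (auto simp: lin_indep_rows_def N_def eval_nat_numeral less_Suc_eq)
  moreover have "lin_form 3 (N 0) = Const m * Var 0" "lin_form 3 (N 1) = Var 1" "lin_form 3 (N 2) = Var 2"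
    by (simp_all add: lin_form_3 N_def)
  ultimately show ?thesis
    unfolding good_def using assms(2) by metis
qed

(* The matrix y of the proof idea: restricted_coeffs u c p q t i = l_i(v_t). *)
definition restricted_coeffs :: "(nat \<Rightarrow> 'k::comm_ring_1) \<Rightarrow> (nat \<Rightarrow> 'k) \<Rightarrow> nat \<Rightarrow> nat \<Rightarrow> nat \<Rightarrow> nat \<Rightarrow> 'k"
  where "restricted_coeffs u c p q t i =
    (if t = 0 then u i else if t = 1 then c i * u i + (if i = q then 1 else 0) else if i = p then 1 else 0)"

lemma lin_indep_rows_restricted_coeffs:
  assumes "p < r" "q < r" "p \<noteq> q" "u p = 0" "u q = 0" "i < r" "u i \<noteq> 0"
  shows "lin_indep_rows 3 r (restricted_coeffs u c p q)"
  unfolding lin_indep_rows_def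
proof (intro allI impI)
  fix \<gamma> :: "nat \<Rightarrow> 'a" and t :: nat
  assume \<gamma>: "\<forall>i<r. (\<Sum>t<3. \<gamma> t * restricted_coeffs u c p q t i) = 0" and "t < 3"
  have coord: "\<gamma> 0 * restricted_coeffs u c p q 0 j + \<gamma> 1 * restricted_coeffs u c p q 1 j
      + \<gamma> 2 * restricted_coeffs u c p q 2 j = 0" if "j < r" for j
    using \<gamma> that by (simp add: eval_nat_numeral add_ac)
  from coord[of p] coord[of q] have "\<gamma> 2 = 0" "\<gamma> 1 = 0"
    using assms by (simp_all add: restricted_coeffs_def)
  moreover from this coord[of i] have "\<gamma> 0 = 0"
    using assms by (auto simp: restricted_coeffs_def)
  ultimately show "\<gamma> t = 0"
    using \<open>t < 3\<close> by (auto simp: eval_nat_numeral less_Suc_eq)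
qed

lemma diagonal_form_restricted_coeffs:
  assumes "d \<ge> 1" "finite S" "S \<subseteq> {..<r}" "p < r" "q < r" "p \<notin> S" "q \<notin> S" "p \<noteq> q"
    and "\<forall>i. i \<notin> S \<longrightarrow> u i = 0"
  shows "(\<Sum>i<r. Const (a i) * lin_form 3 (\<lambda>t. restricted_coeffs u c p q t i) ^ d)
       = (\<Sum>i\<in>S. Const (a i) * (Const (u i) * Var 0 + Const (c i * u i) * Var 1) ^ d)
         + Const (a q) * Var 1 ^ d + Const (a p) * Var 2 ^ d"
proof -
  define T where "T i = Const (a i) * lin_form 3 (\<lambda>t. restricted_coeffs u c p q t i) ^ d" for i
  have "(\<Sum>i<r. T i) = (\<Sum>i\<in>insert p (insert q S). T i)"
    using assms by (intro sum.mono_neutral_right)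
      (auto simp: T_def restricted_coeffs_def lin_form_3 power_0_left)
  also have "\<dots> = (\<Sum>i\<in>S. T i) + T q + T p"
    using assms by (simp add: add_ac)
  also have "(\<Sum>i\<in>S. T i) = (\<Sum>i\<in>S. Const (a i) * (Const (u i) * Var 0 + Const (c i * u i) * Var 1) ^ d)"
    using assms by (intro sum.cong) (auto simp: T_def restricted_coeffs_def lin_form_3)
  finally show ?thesis
    using assms by (simp add: T_def restricted_coeffs_def lin_form_3)
qed

lemma exists_good_substitution_into_diagonal:
  fixes a :: "nat \<Rightarrow> 'k::field_char_0" and K :: nat
  assumes brauer: "\<And>b::nat \<Rightarrow> 'k. \<exists>\<mu>. (\<exists>k<K. \<mu> k \<noteq> 0) \<and> (\<Sum>k<K. b k * \<mu> k ^ d) = 0"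
    and "d \<ge> 1" "K ^ (d - 1) + 2 \<le> r" "\<forall>i<r. a i \<noteq> 0"
  shows "\<exists>y. lin_indep_rows 3 r y \<and> good d (\<Sum>i<r. Const (a i) * lin_form 3 (\<lambda>t. y t i) ^ d)"
proof -
  obtain e where d: "d = Suc e"
    using assms(2) by (cases d) auto
  define G where "G = K ^ e"
  obtain u c where u: "\<forall>i. i \<notin> {..<G} \<longrightarrow> u i = 0"
    and lower: "\<forall>j<e. moment a d u c {..<G} j = 0" and top: "moment a d u c {..<G} e \<noteq> 0"
    using exists_first_nonzero_moment[OF brauer, of "{..<G}" e a] assms(3,4) by (auto simp: G_def d)
  obtain i where "i < G" "u i \<noteq> 0"
  proof -
    have "moment a d u c {..<G} e = 0" if "\<forall>i<G. u i = 0"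
      using that by (simp add: moment_def d)
    with top that show thesis
      by auto
  qed
  then have "lin_indep_rows 3 r (restricted_coeffs u c G (Suc G))"
    using assms(3) u by (intro lin_indep_rows_restricted_coeffs) (auto simp: G_def d)
  moreover have "good d (\<Sum>i<r. Const (a i) * lin_form 3 (\<lambda>t. restricted_coeffs u c G (Suc G) t i) ^ d)"
  proof -
    have "of_nat d * moment a d u c {..<G} e \<noteq> 0" "a G \<noteq> 0"
      using top assms(3,4) by (simp_all add: d G_def del: of_nat_Suc)
    then have "good d (Const (of_nat d * moment a d u c {..<G} e) * Var 0 * Var 1 ^ (d - 1)
        + Const (moment a d u c {..<G} d + a (Suc G)) * Var 1 ^ d + Const (a G) * Var 2 ^ d)"
      by (rule good_normal_form)
    moreover have "(\<Sum>i<r. Const (a i) * lin_form 3 (\<lambda>t. restricted_coeffs u c G (Suc G) t i) ^ d)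
        = Const (of_nat d * moment a d u c {..<G} e) * Var 0 * Var 1 ^ (d - 1)
          + Const (moment a d u c {..<G} d + a (Suc G)) * Var 1 ^ d + Const (a G) * Var 2 ^ d"
    proof -
      have "(\<Sum>i<r. Const (a i) * lin_form 3 (\<lambda>t. restricted_coeffs u c G (Suc G) t i) ^ d)
          = (\<Sum>i<G. Const (a i) * (Const (u i) * Var 0 + Const (c i * u i) * Var 1) ^ d)
            + Const (a (Suc G)) * Var 1 ^ d + Const (a G) * Var 2 ^ d"
        using assms(2,3) u by (intro diagonal_form_restricted_coeffs) (auto simp: G_def d)
      also have "(\<Sum>i<G. Const (a i) * (Const (u i) * Var 0 + Const (c i * u i) * Var 1) ^ d)
          = Const (of_nat d * moment a d u c {..<G} e) * Var 0 * Var 1 ^ (d - 1)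
            + Const (moment a d u c {..<G} d) * Var 1 ^ d"
        using sum_power_binary_form_lower_moments_vanish[OF lower[unfolded d]] by (simp add: d)
      finally show ?thesis
        by (simp add: Const.hom_add distrib_right add_ac)
    qed
    ultimately show ?thesis
      by simp
  qed
  ultimately show ?thesis
    by blast
qed

lemma lin_indep_rows_extend:
  assumes "lin_indep_rows r n M" "n \<le> n'" "\<And>i j. i < r \<Longrightarrow> j < n \<Longrightarrow> M' i j = M i j"
  shows "lin_indep_rows r n' M'"
  unfolding lin_indep_rows_def
proof (intro allI impI)
  fix c :: "nat \<Rightarrow> 'a" and i
  assume c: "\<forall>j<n'. (\<Sum>i<r. c i * M' i j) = 0" and "i < r"
  have "(\<Sum>i<r. c i * M i j) = (\<Sum>i<r. c i * M' i j)" if "j < n" for j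
    using assms(3) that by (intro sum.cong) simp_all
  then have "(\<Sum>i<r. c i * M i j) = 0" if "j < n" for j
    using c that assms(2) by simp
  then show "c i = 0"
    using assms(1) \<open>i < r\<close> unfolding lin_indep_rows_def by blast
qed

lemma good_restrict3_if_good_substitution:
  assumes "lin_indep_rows n n M" "r \<le> n" "lin_indep_rows 3 r y"
    and "good d (\<Sum>i<r. Const (a i) * lin_form 3 (\<lambda>t. y t i) ^ d)"
  shows "\<exists>v. (\<forall>t<3. \<forall>j\<ge>n. v t j = 0) \<and> lin_indep_rows 3 n v
           \<and> good d (restrict3 n v (\<Sum>i<r. Const (a i) * lin_form n (M i) ^ d))"
proof -
  define y' where "y' t i = (if i < r then y t i else 0)" for t i
  have "\<exists>w. (\<forall>j\<ge>n. w j = 0) \<and> (\<forall>i<n. (\<Sum>j<n. M i j * w j) = y' t i)" for t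
    using lin_indep_rows_solvable[OF assms(1)] .
  then obtain v where v_zero: "\<And>t. \<forall>j\<ge>n. v t j = 0"
    and v_image: "\<And>t i. i < n \<Longrightarrow> (\<Sum>j<n. M i j * v t j) = y' t i"
    by metis
  have "lin_indep_rows 3 n y'"
    using assms(3,2) by (rule lin_indep_rows_extend) (simp add: y'_def)
  then have "lin_indep_rows 3 n v"
    by (rule lin_indep_rows_if_image) (rule v_image)
  moreover have "restrict3 n v (\<Sum>i<r. Const (a i) * lin_form n (M i) ^ d)
      = (\<Sum>i<r. Const (a i) * lin_form 3 (\<lambda>t. y t i) ^ d)"
    unfolding restrict3_diagonal using assms(2) by (intro sum.cong) (simp_all add: v_image y'_def)
  ultimately have "lin_indep_rows 3 n v \<and> good d (restrict3 n v (\<Sum>i<r. Const (a i) * lin_form n (M i) ^ d))"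
    using assms(4) by simp
  with v_zero show ?thesis
    by blast
qed

theorem proposition5p1:
  fixes d :: nat
  assumes "infinite (UNIV :: 'k::field_char_0 set)"
    and "brauer_field TYPE('k)"
    and "d \<ge> 1"
    and "Sigma_star TYPE('k) d"
  shows "\<exists>C::nat. \<forall>(n::nat) (f::'k mpoly).
           homogeneous d f \<and> in_vars n f \<and> (\<exists>r>C. diagonal_rank n d f r) \<longrightarrow>
           (\<exists>v::nat \<Rightarrow> nat \<Rightarrow> 'k. (\<forall>t<3. \<forall>j\<ge>n. v t j = 0) \<and> lin_indep_rows 3 n v
              \<and> good d (restrict3 n v f))"
proof -
  obtain N where "\<forall>n>N. \<forall>b::nat \<Rightarrow> 'k. \<exists>\<mu>. (\<exists>k<n. \<mu> k \<noteq> 0) \<and> (\<Sum>k<n. b k * \<mu> k ^ d) = 0"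
    using assms(2,3) unfolding brauer_field_def by blast
  then have brauer: "\<And>b::nat \<Rightarrow> 'k. \<exists>\<mu>. (\<exists>k<Suc N. \<mu> k \<noteq> 0) \<and> (\<Sum>k<Suc N. b k * \<mu> k ^ d) = 0"
    by blast
  show ?thesis
  proof (intro exI[of _ "Suc N ^ (d - 1) + 1"] allI impI)
    fix n and f :: "'k mpoly"
    assume "homogeneous d f \<and> in_vars n f \<and> (\<exists>r>Suc N ^ (d - 1) + 1. diagonal_rank n d f r)"
    then obtain r M a where r: "Suc N ^ (d - 1) + 2 \<le> r" "r \<le> n" and M: "lin_indep_rows n n M"
      and a: "\<forall>i<r. a i \<noteq> 0" and f: "f = (\<Sum>i<r. Const (a i) * lin_form n (M i) ^ d)"
      unfolding diagonal_rank_def by (auto simp: Suc_le_eq)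
    obtain y where "lin_indep_rows 3 r y" "good d (\<Sum>i<r. Const (a i) * lin_form 3 (\<lambda>t. y t i) ^ d)"
      using exists_good_substitution_into_diagonal[OF brauer assms(3) r(1) a] by blast
    then show "\<exists>v. (\<forall>t<3. \<forall>j\<ge>n. v t j = 0) \<and> lin_indep_rows 3 n v \<and> good d (restrict3 n v f)"
      unfolding f using good_restrict3_if_good_substitution[OF M r(2)] by blast
  qed
qed

end
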